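(* For all $n\ge0$, $$\prod_{i=1}^n(1+q^i)=F_{n+1}(q)+\sum_{k=0}^{n-2}q^kF_k(q)\prod_{i=k+3}^n(1+q^i),$$ where an empty product equals $1$.
   Context: $\Pi_n(13/2,123)$ is the set of layered matchings of $[n]$: set partitions whose blocks are consecutive intervals $[1,i_1]/\dots/[i_{k-1}+1,n]$, each of size $1$ or $2$. $\Pi_0(13/2,123)$ consists of the empty partition. For $\pi=B_1/\dots/B_k$ with $\min B_1<\dots<\min B_k$, $rb(\pi)$ is the number of pairs $(b,B_j)$ with $b\in B_i$, $j>i$, $\max B_j>b$. Define $F_n(q)=\sum_{\pi\in\Pi_n(13/2,123)}q^{rb(\pi)}$, so $F_0(q)=F_1(q)=1$. *)

theory Defs
  imports Main
begin

definition layered_matchings :: "nat \<Rightarrow> nat set set set" where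
  "layered_matchings n = {P. \<Union>P = {1..n}
      \<and> (\<forall>B\<in>P. \<exists>a. B = {a..a} \<or> B = {a..a+1})
      \<and> (\<forall>B\<in>P. \<forall>C\<in>P. B \<noteq> C \<longrightarrow> B \<inter> C = {})}"

definition rb :: "nat set set \<Rightarrow> nat" where
  "rb P = card {(b, C). \<exists>B\<in>P. b \<in> B \<and> C \<in> P \<and> Min B < Min C \<and> b < Max C}"

definition F :: "nat \<Rightarrow> 'a::comm_ring_1 \<Rightarrow> 'a" where
  "F n q = (\<Sum>P\<in>layered_matchings n. q ^ rb P)"

end

theory Submission
  imports Defs
begin

text \<open>The block containing the largest point n + 2 of a layered matching is either
  {n + 2} or {n + 1, n + 2}, and it comes after every other block, so it adds one
  rb-pair for each of the n + 1 resp. n remaining points. Hence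
  F (n + 2) = q^(n+1) F (n + 1) + q^n F n with F 0 = F 1 = 1. The identity then holds
  for every sequence with this recurrence, by induction on n: multiplying the case n + 1
  by 1 + q^(n+2) produces the case n + 2, the recurrence applied twice giving
  (1 + q^(n+2)) F (n + 2) = F (n + 3) + q^n F n, where q^n F n is the new summand k = n.\<close>

lemma layered_matchingsD:
  assumes "P \<in> layered_matchings m"
  shows "\<Union>P = {1..m}" and "B \<in> P \<Longrightarrow> \<exists>a. B = {a..a} \<or> B = {a..a+1}"
    and "B \<in> P \<Longrightarrow> C \<in> P \<Longrightarrow> B \<noteq> C \<Longrightarrow> B \<inter> C = {}"
  using assms unfolding layered_matchings_def mem_Collect_eq by (elim conjE; blast)+

lemma layered_matching_block:
  assumes "P \<in> layered_matchings m" and "B \<in> P"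
  shows "finite B" and "B \<noteq> {}" and "B \<subseteq> {1..m}"
  using assms by (auto simp: layered_matchings_def)

lemma finite_layered_matchings: "finite (layered_matchings m)"
  by (rule finite_subset[of _ "Pow (Pow {1..m})"]) (auto simp: layered_matchings_def)

lemma finite_layered_matching: "P \<in> layered_matchings m \<Longrightarrow> finite P"
  by (rule finite_subset[of _ "Pow {1..m}"]) (auto simp: layered_matchings_def Pow_def)

lemma insert_block_layered_matchings:
  assumes "P \<in> layered_matchings m" and "B = {a..a} \<or> B = {a..a+1}"
    and "B \<inter> {1..m} = {}" and "B \<union> {1..m} = {1..k}"
  shows "insert B P \<in> layered_matchings k"
proof -
  have "C \<subseteq> {1..m}" if "C \<in> P" for C
    using layered_matching_block(3)[OF assms(1) that] .
  then show ?thesis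
    using assms unfolding layered_matchings_def by auto
qed

lemma remove_block_layered_matchings:
  assumes "P \<in> layered_matchings m" and "B \<in> P" and "{1..m} - B = {1..k}"
  shows "P - {B} \<in> layered_matchings k"
proof -
  have "\<Union>(P - {B}) = \<Union>P - B"
    using layered_matchingsD(3)[OF assms(1) assms(2)] by blast
  then show ?thesis using assms unfolding layered_matchings_def by auto
qed

lemma layered_matching_last_block:
  assumes "P \<in> layered_matchings (Suc n)"
  obtains B where "B \<in> P" and "B = {Suc n} \<or> B = {n..Suc n}"
proof -
  have "Suc n \<in> \<Union>P" using layered_matchingsD(1)[OF assms] by simp
  then obtain B where B: "B \<in> P" "Suc n \<in> B" by blast
  obtain a where "B = {a..a} \<or> B = {a..a+1}"
    using layered_matchingsD(2)[OF assms B(1)] by blast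
  then have "B = {Suc n} \<or> B = {n..Suc n}"
  proof
    assume "B = {a..a}"
    then show ?thesis using B(2) by simp
  next
    assume B_pair: "B = {a..a+1}"
    then have "a + 1 \<le> Suc n"
      using layered_matching_block(3)[OF assms B(1)] by auto
    moreover have "Suc n \<le> a + 1" using B(2) B_pair by simp
    ultimately show ?thesis using B_pair by simp
  qed
  with B(1) that show thesis by blast
qed

lemma rb_insert_last:
  assumes "finite P" and "\<forall>C\<in>P. finite C \<and> C \<noteq> {}" and "finite B" and "B \<noteq> {}"
    and below: "\<forall>x\<in>\<Union>P. \<forall>y\<in>B. x < y"
  shows "rb (insert B P) = rb P + card (\<Union>P)"
proof -
  let ?pairs = "\<lambda>P. {(b, C). \<exists>B\<in>P. b \<in> B \<and> C \<in> P \<and> Min B < Min C \<and> b < Max C}"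
  have "B \<notin> P" using assms(4) below by blast
  have Min_less: "Min C < Min B" if "C \<in> P" for C
    using assms(2,3,4) below that by (meson Min_in UnionI)
  have less_Max: "b < Max B" if "b \<in> \<Union>P" for b
    using assms(3,4) below that by (meson Max_in)
  have "?pairs (insert B P) = ?pairs P \<union> (\<lambda>b. (b, B)) ` \<Union>P"
    using less_Max \<open>B \<notin> P\<close> by (auto dest: Min_less)
  moreover have "finite (?pairs P)"
    by (rule finite_subset[of _ "\<Union>P \<times> P"]) (use assms(1,2) in auto)
  moreover have "?pairs P \<inter> (\<lambda>b. (b, B)) ` \<Union>P = {}"
    using \<open>B \<notin> P\<close> by auto
  moreover have "card ((\<lambda>b. (b, B)) ` \<Union>P) = card (\<Union>P)"
    by (rule card_image) (auto simp: inj_on_def)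
  moreover have "finite (\<Union>P)" using assms(1,2) by auto
  ultimately show ?thesis unfolding rb_def by (simp add: card_Un_disjoint)
qed

lemma layered_matchings_0: "layered_matchings 0 = {{}}"
  by (auto simp: layered_matchings_def)

lemma layered_matchings_1: "layered_matchings 1 = {{{1}}}"
proof (intro equalityI subsetI)
  fix P assume P: "P \<in> layered_matchings 1"
  then obtain B where B: "B \<in> P" "B = {1} \<or> B = {0..1}"
    using layered_matching_last_block[of P 0] by auto
  then have "B = {1}" using layered_matching_block(3)[OF P] by fastforce
  have "P - {B} \<in> layered_matchings 0"
    by (rule remove_block_layered_matchings[OF P B(1)]) (simp add: \<open>B = {1}\<close>)
  then have "P = {{1}}" using B(1) \<open>B = {1}\<close> layered_matchings_0 by auto
  then show "P \<in> {{{1}}}" by simp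
next
  fix P :: "nat set set" assume "P \<in> {{{1}}}"
  then show "P \<in> layered_matchings 1"
    using insert_block_layered_matchings[of "{}" 0 "{1}" 1 1] layered_matchings_0 by auto
qed

lemma layered_matchings_Suc_Suc:
  "layered_matchings (n + 2) =
     insert {n + 2} ` layered_matchings (n + 1) \<union> insert {n + 1..n + 2} ` layered_matchings n"
proof (intro equalityI subsetI)
  fix P assume P: "P \<in> layered_matchings (n + 2)"
  then obtain B where B: "B \<in> P" "B = {n + 2} \<or> B = {n + 1..n + 2}"
    using layered_matching_last_block[of P "n + 1"] by auto
  have "P = insert B (P - {B})" using B(1) by blast
  moreover have "P - {B} \<in> layered_matchings (n + 1)" if "B = {n + 2}"
    by (rule remove_block_layered_matchings[OF P B(1)]) (auto simp: that)
  moreover have "P - {B} \<in> layered_matchings n" if "B = {n + 1..n + 2}"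
    by (rule remove_block_layered_matchings[OF P B(1)]) (auto simp: that)
  ultimately show "P \<in> insert {n + 2} ` layered_matchings (n + 1) \<union>
      insert {n + 1..n + 2} ` layered_matchings n"
    using B(2) by blast
next
  have "insert {n + 2} P \<in> layered_matchings (n + 2)" if "P \<in> layered_matchings (n + 1)" for P
    by (rule insert_block_layered_matchings[OF that, of _ "n + 2"]) auto
  moreover have "insert {n + 1..n + 2} P \<in> layered_matchings (n + 2)"
    if "P \<in> layered_matchings n" for P
    by (rule insert_block_layered_matchings[OF that, of _ "n + 1"]) auto
  ultimately show "P \<in> layered_matchings (n + 2)"
    if "P \<in> insert {n + 2} ` layered_matchings (n + 1) \<union>
      insert {n + 1..n + 2} ` layered_matchings n" for P
    using that by blast
qed

lemma sum_rb_insert_last_block: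
  fixes q :: "'a::comm_ring_1"
  assumes "finite B" and "B \<noteq> {}" and after: "\<forall>y\<in>B. m < y"
  shows "(\<Sum>P\<in>insert B ` layered_matchings m. q ^ rb P) = q ^ m * F m q"
proof -
  have "B \<notin> P" if "P \<in> layered_matchings m" for P
    using layered_matching_block(3)[OF that] assms(2) after by fastforce
  then have "inj_on (insert B) (layered_matchings m)"
    by (auto simp: inj_on_def insert_ident)
  moreover have "rb (insert B P) = rb P + m" if P: "P \<in> layered_matchings m" for P
  proof -
    have "\<Union>P = {1..m}" using layered_matchingsD(1)[OF P] .
    then have "rb (insert B P) = rb P + card (\<Union>P)"
      using finite_layered_matching[OF P] layered_matching_block[OF P] assms
      by (intro rb_insert_last) auto
    then show ?thesis using \<open>\<Union>P = {1..m}\<close> by simp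
  qed
  ultimately show ?thesis
    by (simp add: sum.reindex F_def sum_distrib_left power_add mult.commute)
qed

lemma F_0: "F 0 q = 1"
  by (simp add: F_def layered_matchings_0 rb_def)

lemma F_1: "F 1 q = 1"
proof -
  have "rb {{1}} = 0" unfolding rb_def by (simp add: card_eq_0_iff)
  then show ?thesis unfolding F_def layered_matchings_1 by simp
qed

lemma F_Suc_Suc: "F (n + 2) q = q ^ (n + 1) * F (n + 1) q + q ^ n * F n q"
proof -
  have "{n + 1..n + 2} \<notin> insert {n + 2} P" if "P \<in> layered_matchings (n + 1)" for P
  proof
    assume "{n + 1..n + 2} \<in> insert {n + 2} P"
    moreover have "{n + 1..n + 2} \<noteq> {n + 2}" by (simp add: set_eq_iff exI[of _ "n + 1"])
    ultimately have "{n + 1..n + 2} \<subseteq> {1..n + 1}" using layered_matching_block(3)[OF that] by blast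
    then show False by auto
  qed
  then have "insert {n + 2} ` layered_matchings (n + 1) \<inter> insert {n + 1..n + 2} ` layered_matchings n = {}"
    unfolding disjoint_iff by (metis image_iff insertI1)
  then have "F (n + 2) q = (\<Sum>P\<in>insert {n + 2} ` layered_matchings (n + 1). q ^ rb P)
      + (\<Sum>P\<in>insert {n + 1..n + 2} ` layered_matchings n. q ^ rb P)"
    unfolding F_def layered_matchings_Suc_Suc
    by (intro sum.union_disjoint) (auto simp: finite_layered_matchings)
  then show ?thesis by (simp add: sum_rb_insert_last_block)
qed

lemma sum_tail_products_step:
  fixes g a :: "nat \<Rightarrow> 'a::comm_semiring_1"
  shows "(\<Sum>k\<in>{k. k + 2 \<le> m + 2}. g k * (\<Prod>i=k+3..m+2. a i))
    = a (m + 2) * (\<Sum>k\<in>{k. k + 2 \<le> m + 1}. g k * (\<Prod>i=k+3..m+1. a i)) + g m"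
proof -
  have "{k. k + 2 \<le> m + 2} = {..<Suc m}" and "{k. k + 2 \<le> m + 1} = {..<m}" by auto
  moreover have "(\<Prod>i=k+3..m+2. a i) = a (m + 2) * (\<Prod>i=k+3..m+1. a i)" if "k < m" for k
    using that by (simp add: prod.cl_ivl_Suc mult.commute)
  ultimately show ?thesis by (simp add: sum_distrib_left mult.left_commute)
qed

lemma prod_one_plus_powers_expansion:
  fixes q :: "'a::comm_ring_1" and f :: "nat \<Rightarrow> 'a"
  assumes f0: "f 0 = 1" and f1: "f 1 = 1"
    and rec: "\<And>n. f (n + 2) = q ^ (n + 1) * f (n + 1) + q ^ n * f n"
  shows "(\<Prod>i=1..n. 1 + q ^ i) =
    f (n + 1) + (\<Sum>k\<in>{k. k + 2 \<le> n}. q ^ k * f k * (\<Prod>i=k+3..n. 1 + q ^ i))"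
proof (induction n)
  case 0
  show ?case using f1 by simp
next
  case (Suc n)
  show ?case
  proof (cases n)
    case 0
    then show ?thesis using rec[of 0] f0 f1 by simp
  next
    case (Suc m)
    let ?tail = "\<lambda>n. \<Sum>k\<in>{k. k + 2 \<le> n}. q ^ k * f k * (\<Prod>i=k+3..n. 1 + q ^ i)"
    have "f (m + 3) = q ^ (m + 2) * f (m + 2) + q ^ (m + 1) * f (m + 1)"
      using rec[of "m + 1"] by (simp add: numeral_3_eq_3)
    then have shift: "f (m + 3) + q ^ m * f m = (1 + q ^ (m + 2)) * f (m + 2)"
      using rec[of m] by (simp add: algebra_simps)
    have "(\<Prod>i=1..m+2. 1 + q ^ i) = (1 + q ^ (m + 2)) * (\<Prod>i=1..m+1. 1 + q ^ i)"
      by (simp add: prod.cl_ivl_Suc)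
    also have "\<dots> = (1 + q ^ (m + 2)) * (f (m + 2) + ?tail (m + 1))"
      using Suc.IH \<open>n = Suc m\<close> by simp
    also have "\<dots> = f (m + 3) + ?tail (m + 2)"
      using shift sum_tail_products_step[of "\<lambda>k. q ^ k * f k" "\<lambda>i. 1 + q ^ i" m]
      by (simp add: algebra_simps)
    finally show ?thesis using \<open>n = Suc m\<close> by (simp add: numeral_eq_Suc)
  qed
qed

theorem theorem4p8:
  fixes q :: "'a::comm_ring_1" and n :: nat
  shows "(\<Prod>i=1..n. 1 + q ^ i) =
    F (n + 1) q + (\<Sum>k\<in>{k. k + 2 \<le> n}. q ^ k * F k q * (\<Prod>i=k+3..n. 1 + q ^ i))"
  by (rule prod_one_plus_powers_expansion[where f = "\<lambda>k. F k q", OF F_0 F_1 F_Suc_Suc])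

end
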